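(* Let $(E\to M,\rho,\langle\cdot,\cdot\rangle,[\cdot,\cdot])$ be a Courant algebroid, $\mathcal{G}$ a generalized metric on $E$ and $D$ a generalized connection on $E$ compatible with $\mathcal{G}$ (i.e. $D\mathcal{G}=0$). Then the total generalized Ricci curvature satisfies $\mathrm{Ric}=\mathrm{Ric}^+_{\mathrm{GF}}+\mathrm{Ric}^-_{\mathrm{GF}}$, i.e. for all $a,b\in\Gamma(E)$, \[\mathrm{Ric}(a,b)=\mathrm{Ric}^+_{\mathrm{GF}}(a_-,b_+)+\mathrm{Ric}^-_{\mathrm{GF}}(a_+,b_-).\]
   Context: A Courant algebroid $(E\to M,\rho,\langle\cdot,\cdot\rangle,[\cdot,\cdot])$ consists of a vector bundle $E$, a nondegenerate symmetric bilinear form, an anchor $\rho:E\to TM$ and a bracket on $\Gamma(E)$ with $[a,[b,c]]=[[a,b],c]+[b,[a,c]]$, $\mathcal{L}_{\rho a}\langle b,c\rangle=\langle[a,b],c\rangle+\langle b,[a,c]\rangle$, $2[a,a]=\rho^*d\langle a,a\rangle$. A generalized connection is a linear $D:\Gamma(E)\to\Gamma(E^*\otimes E)$ with $D(fa)=fDa+\rho^*df\otimes a$ and $\rho^*d\langle a,b\rangle=\langle Da,b\rangle+\langle a,Db\rangle$; $D_ba:=(Da)(b)$. Naive curvature: $\mathcal{R}_0(a,b)c:=D_aD_bc-D_bD_ac-D_{[a,b]}c$. A generalized metric is a self-adjoint $\mathcal{G}\in\operatorname{End}E$ with $\mathcal{G}^2=1$; $V_\pm=\ker(\mathcal{G}\mp1)$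 and $x_\pm:=\tfrac12(1\pm\mathcal{G})x$. $D$ compatible with $\mathcal{G}$ means $D$ preserves $\Gamma(V_\pm)$. The total curvature is $\mathcal{R}(a,b):=\mathcal{R}_0(a_+,b_-)+\mathcal{R}_0(a_-,b_+)\in\operatorname{End}E$, and the total generalized Ricci curvature is $\mathrm{Ric}(a,b):=$ trace of the endomorphism $c\mapsto\mathcal{R}(c,a)b$ of $E$. For compatible $D$, $\mathrm{Ric}^\pm_{\mathrm{GF}}(a_\mp,b_\pm)$ is the trace of the endomorphism $V_\pm\to V_\pm$, $c_\pm\mapsto\mathcal{R}_0(c_\pm,a_\mp)b_\pm$. *)

theory Defs
  imports Main "HOL.Real_Vector_Spaces"
begin

text \<open>Algebraic (Serre--Swan) model of a Courant algebroid.
  The type 'r plays the role of the ring of smooth functions C-infinity(M)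
  (a commutative real algebra), the type 'e plays the role of the space of
  sections Gamma(E), with module action smult.  The anchor is given through
  its action on functions: anchor a f = L_{rho a} f.  Sections form a finitely
  generated projective module (existence of a finite dual basis), the pairing
  is C-infinity(M)-bilinear, symmetric and nondegenerate (it identifies Gamma(E)
  with Gamma(E^*)).\<close>

definition module_ax :: "('r::comm_ring_1 \<Rightarrow> 'e::ab_group_add \<Rightarrow> 'e) \<Rightarrow> bool" where
  "module_ax smult \<longleftrightarrow>
     (\<forall>r x y. smult r (x + y) = smult r x + smult r y) \<and>
     (\<forall>r s x. smult (r + s) x = smult r x + smult s x) \<and>
     (\<forall>r s x. smult (r * s) x = smult r (smult s x)) \<and>
     (\<forall>x. smult 1 x = x)"

definition linear_on :: "('r::comm_ring_1 \<Rightarrow> 'e::ab_group_add \<Rightarrow> 'e) \<Rightarrow> 'e set \<Rightarrow> ('e \<Rightarrow> 'r) \<Rightarrow> bool" where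
  "linear_on smult W \<phi> \<longleftrightarrow>
     (\<forall>r x y. x \<in> W \<longrightarrow> y \<in> W \<longrightarrow> \<phi> (smult r x + y) = r * \<phi> x + \<phi> y)"

definition dual_basis :: "('r::comm_ring_1 \<Rightarrow> 'e::ab_group_add \<Rightarrow> 'e) \<Rightarrow> 'e set \<Rightarrow> nat \<Rightarrow> (nat \<Rightarrow> 'e) \<Rightarrow> (nat \<Rightarrow> 'e \<Rightarrow> 'r) \<Rightarrow> bool" where
  "dual_basis smult W n e \<phi> \<longleftrightarrow>
     (\<forall>i<n. e i \<in> W) \<and> (\<forall>i<n. linear_on smult W (\<phi> i)) \<and>
     (\<forall>x\<in>W. x = (\<Sum>i<n. smult (\<phi> i x) (e i)))"

definition mtrace :: "('r::comm_ring_1 \<Rightarrow> 'e::ab_group_add \<Rightarrow> 'e) \<Rightarrow> 'e set \<Rightarrow> ('e \<Rightarrow> 'e) \<Rightarrow> 'r" where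
  "mtrace smult W T =
     (let (n, e, \<phi>) = (SOME (n, e, \<phi>). dual_basis smult W n e \<phi>)
      in \<Sum>i<n. \<phi> i (T (e i)))"

definition rho_star_d :: "('e \<Rightarrow> 'r \<Rightarrow> 'r) \<Rightarrow> ('e \<Rightarrow> 'e \<Rightarrow> 'r) \<Rightarrow> 'r \<Rightarrow> 'e" where
  "rho_star_d anchor pair f = (THE x. \<forall>y. pair x y = anchor y f)"

definition courant_algebroid ::
  "('r::{comm_ring_1,real_algebra_1} \<Rightarrow> 'e::ab_group_add \<Rightarrow> 'e) \<Rightarrow> ('e \<Rightarrow> 'r \<Rightarrow> 'r) \<Rightarrow>
   ('e \<Rightarrow> 'e \<Rightarrow> 'r) \<Rightarrow> ('e \<Rightarrow> 'e \<Rightarrow> 'e) \<Rightarrow> bool" where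
  "courant_algebroid smult anchor pair br \<longleftrightarrow>
     module_ax smult \<and>
     \<comment> \<open>Gamma(E) finitely generated projective (sections of a vector bundle)\<close>
     (\<exists>n e \<phi>. dual_basis smult UNIV n e \<phi>) \<and>
     \<comment> \<open>anchor: C-infinity(M)-linear in the section, a real-linear derivation on functions\<close>
     (\<forall>r a b f. anchor (smult r a + b) f = r * anchor a f + anchor b f) \<and>
     (\<forall>a f g. anchor a (f + g) = anchor a f + anchor a g) \<and>
     (\<forall>a f g. anchor a (f * g) = f * anchor a g + g * anchor a f) \<and>
     (\<forall>a c f. anchor a (scaleR c f) = scaleR c (anchor a f)) \<and>
     \<comment> \<open>pairing: symmetric, bilinear, nondegenerate\<close>
     (\<forall>a b. pair a b = pair b a) \<and>
     (\<forall>r a b c. pair (smult r a + b) c = r * pair a c + pair b c) \<and>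
     (\<forall>a. (\<forall>b. pair a b = 0) \<longrightarrow> a = 0) \<and>
     (\<forall>\<phi>. linear_on smult UNIV \<phi> \<longrightarrow> (\<exists>a. \<forall>b. pair a b = \<phi> b)) \<and>
     \<comment> \<open>bracket: real-bilinear\<close>
     (\<forall>a b c. br a (b + c) = br a b + br a c) \<and>
     (\<forall>a b c. br (a + b) c = br a c + br b c) \<and>
     (\<forall>a b (c::real). br a (smult (of_real c) b) = smult (of_real c) (br a b)) \<and>
     (\<forall>a b (c::real). br (smult (of_real c) a) b = smult (of_real c) (br a b)) \<and>
     \<comment> \<open>Courant axioms\<close>
     (\<forall>a b c. br a (br b c) = br (br a b) c + br b (br a c)) \<and>
     (\<forall>a b c. anchor a (pair b c) = pair (br a b) c + pair b (br a c)) \<and>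
     (\<forall>a. br a a + br a a = rho_star_d anchor pair (pair a a))"

text \<open>Generalized connection; D b a = D_b a = (Da)(b).\<close>
definition generalized_connection ::
  "('r::{comm_ring_1,real_algebra_1} \<Rightarrow> 'e::ab_group_add \<Rightarrow> 'e) \<Rightarrow> ('e \<Rightarrow> 'r \<Rightarrow> 'r) \<Rightarrow>
   ('e \<Rightarrow> 'e \<Rightarrow> 'r) \<Rightarrow> ('e \<Rightarrow> 'e \<Rightarrow> 'e) \<Rightarrow> bool" where
  "generalized_connection smult anchor pair D \<longleftrightarrow>
     \<comment> \<open>Da is a section of E^* (x) E: C-infinity(M)-linear in the lower slot\<close>
     (\<forall>r b b' a. D (smult r b + b') a = smult r (D b a) + D b' a) \<and>
     \<comment> \<open>D is real-linear\<close>
     (\<forall>b a a'. D b (a + a') = D b a + D b a') \<and>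
     (\<forall>b a (c::real). D b (smult (of_real c) a) = smult (of_real c) (D b a)) \<and>
     \<comment> \<open>Leibniz rule D(fa) = f Da + rho^* df (x) a\<close>
     (\<forall>f a b. D b (smult f a) = smult f (D b a) + smult (pair (rho_star_d anchor pair f) b) a) \<and>
     \<comment> \<open>metric compatibility rho^* d<a,c> = <Da,c> + <a,Dc>\<close>
     (\<forall>a b c. pair (rho_star_d anchor pair (pair a c)) b = pair (D b a) c + pair a (D b c))"

definition generalized_metric ::
  "('r::comm_ring_1 \<Rightarrow> 'e::ab_group_add \<Rightarrow> 'e) \<Rightarrow> ('e \<Rightarrow> 'e \<Rightarrow> 'r) \<Rightarrow> ('e \<Rightarrow> 'e) \<Rightarrow> bool" where
  "generalized_metric smult pair G \<longleftrightarrow>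
     (\<forall>r a b. G (smult r a + b) = smult r (G a) + G b) \<and>
     (\<forall>a b. pair (G a) b = pair a (G b)) \<and>
     (\<forall>a. G (G a) = a)"

definition Vplus :: "('e \<Rightarrow> 'e) \<Rightarrow> 'e set" where
  "Vplus G = {x. G x = x}"

definition Vminus :: "('e::ab_group_add \<Rightarrow> 'e) \<Rightarrow> 'e set" where
  "Vminus G = {x. G x = - x}"

definition ppart :: "('r::real_algebra_1 \<Rightarrow> 'e::ab_group_add \<Rightarrow> 'e) \<Rightarrow> ('e \<Rightarrow> 'e) \<Rightarrow> 'e \<Rightarrow> 'e" where
  "ppart smult G x = smult (of_real (1/2)) (x + G x)"

definition mpart :: "('r::real_algebra_1 \<Rightarrow> 'e::ab_group_add \<Rightarrow> 'e) \<Rightarrow> ('e \<Rightarrow> 'e) \<Rightarrow> 'e \<Rightarrow> 'e" where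
  "mpart smult G x = smult (of_real (1/2)) (x - G x)"

definition compatible :: "('e \<Rightarrow> 'e) \<Rightarrow> ('e \<Rightarrow> 'e \<Rightarrow> 'e::ab_group_add) \<Rightarrow> bool" where
  "compatible G D \<longleftrightarrow>
     (\<forall>a b. b \<in> Vplus G \<longrightarrow> D a b \<in> Vplus G) \<and>
     (\<forall>a b. b \<in> Vminus G \<longrightarrow> D a b \<in> Vminus G)"

definition naive_curv :: "('e \<Rightarrow> 'e \<Rightarrow> 'e) \<Rightarrow> ('e \<Rightarrow> 'e \<Rightarrow> 'e::ab_group_add) \<Rightarrow> 'e \<Rightarrow> 'e \<Rightarrow> 'e \<Rightarrow> 'e" where
  "naive_curv br D a b c = D a (D b c) - D b (D a c) - D (br a b) c"

definition total_curv ::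
  "('r::real_algebra_1 \<Rightarrow> 'e::ab_group_add \<Rightarrow> 'e) \<Rightarrow> ('e \<Rightarrow> 'e \<Rightarrow> 'e) \<Rightarrow> ('e \<Rightarrow> 'e) \<Rightarrow>
   ('e \<Rightarrow> 'e \<Rightarrow> 'e) \<Rightarrow> 'e \<Rightarrow> 'e \<Rightarrow> 'e \<Rightarrow> 'e" where
  "total_curv smult br G D a b c =
     naive_curv br D (ppart smult G a) (mpart smult G b) c +
     naive_curv br D (mpart smult G a) (ppart smult G b) c"

definition total_ric ::
  "('r::{comm_ring_1,real_algebra_1} \<Rightarrow> 'e::ab_group_add \<Rightarrow> 'e) \<Rightarrow> ('e \<Rightarrow> 'e \<Rightarrow> 'e) \<Rightarrow> ('e \<Rightarrow> 'e) \<Rightarrow>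
   ('e \<Rightarrow> 'e \<Rightarrow> 'e) \<Rightarrow> 'e \<Rightarrow> 'e \<Rightarrow> 'r" where
  "total_ric smult br G D a b = mtrace smult UNIV (\<lambda>c. total_curv smult br G D c a b)"

definition ric_GF_plus ::
  "('r::comm_ring_1 \<Rightarrow> 'e::ab_group_add \<Rightarrow> 'e) \<Rightarrow> ('e \<Rightarrow> 'e \<Rightarrow> 'e) \<Rightarrow> ('e \<Rightarrow> 'e) \<Rightarrow>
   ('e \<Rightarrow> 'e \<Rightarrow> 'e) \<Rightarrow> 'e \<Rightarrow> 'e \<Rightarrow> 'r" where
  "ric_GF_plus smult br G D a b = mtrace smult (Vplus G) (\<lambda>c. naive_curv br D c a b)"

definition ric_GF_minus ::
  "('r::comm_ring_1 \<Rightarrow> 'e::ab_group_add \<Rightarrow> 'e) \<Rightarrow> ('e \<Rightarrow> 'e \<Rightarrow> 'e) \<Rightarrow> ('e \<Rightarrow> 'e) \<Rightarrow>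
   ('e \<Rightarrow> 'e \<Rightarrow> 'e) \<Rightarrow> 'e \<Rightarrow> 'e \<Rightarrow> 'r" where
  "ric_GF_minus smult br G D a b = mtrace smult (Vminus G) (\<lambda>c. naive_curv br D c a b)"

end

theory Submission
  imports Defs
begin

text \<open>As G is a self-adjoint involution,
  x \<mapsto> x_+ and x \<mapsto> x_- are complementary projections onto the orthogonal summands
  V_+ and V_-, and the (e_i)_+, (e_i)_- with the functionals phi_i((_)_+), phi_i((_)_-) form a
  dual basis adapted to E = V_+ \<oplus> V_-.  Since the trace does not depend on the dual basis,
  tr T = tr_{V_+} (T(_))_+ + tr_{V_-} (T(_))_- for every endomorphism T of E.
  Take T c = R(c,a) b, which is linear in c because R_0(c,a) is tensorial in c whenever
  c is orthogonal to a, as c_\<plusminus> is to a_\<minusplus>.  For c in V_+ only R_0(c, a_-) b survives,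
  and R_0 preserves V_+ and V_- because a compatible connection does, so
  (R_0(c, a_-) b)_+ = R_0(c, a_-) b_+: the trace over V_+ is Ric^+_GF(a_-, b_+), and
  symmetrically the trace over V_- is Ric^-_GF(a_+, b_-).\<close>

lemma sum_lessThan_add: "(\<Sum>i<m + (n::nat). g i) = (\<Sum>i<m. g i) + (\<Sum>i<n. g (m + i))"
  by (induction n) (simp_all add: add.assoc)

lemma module_ax_imp_module: "module_ax smult \<Longrightarrow> module smult"
  unfolding module_ax_def by unfold_locales auto

lemma module_smult_half_double:
  fixes smult :: "'r::{comm_ring_1,real_algebra_1} \<Rightarrow> 'e::ab_group_add \<Rightarrow> 'e"
  assumes "module smult"
  shows "smult (of_real (1/2)) (x + x) = x"
  using assms
  by (simp add: module.scale_right_distrib module.scale_left_distrib[symmetric] module.scale_one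
      flip: of_real_add)

lemma real_algebra_double_eq_0: "p + p = 0 \<Longrightarrow> (p::'a::real_algebra_1) = 0"
  by (metis scaleR_2 scaleR_eq_0_iff zero_neq_numeral)

section \<open>Traces over finitely generated projective modules\<close>

lemma mtrace_dual_basisE:
  assumes "dual_basis smult W n e \<phi>"
  obtains n' e' \<phi>' where "dual_basis smult W n' e' \<phi>'"
    and "\<And>T. mtrace smult W T = (\<Sum>i<n'. \<phi>' i (T (e' i)))"
proof -
  obtain n' e' \<phi>' where some: "(SOME (n, e, \<phi>). dual_basis smult W n e \<phi>) = (n', e', \<phi>')"
    by (metis prod_cases3)
  have "(\<lambda>(n, e, \<phi>). dual_basis smult W n e \<phi>) (SOME (n, e, \<phi>). dual_basis smult W n e \<phi>)"
    by (rule someI[of _ "(n, e, \<phi>)"]) (simp add: assms)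
  then show thesis
    using that[of n' e' \<phi>'] by (simp add: some mtrace_def)
qed

lemma mtrace_cong:
  assumes "dual_basis smult W n e \<phi>" and "\<And>x. x \<in> W \<Longrightarrow> T x = T' x"
  shows "mtrace smult W T = mtrace smult W T'"
proof -
  obtain n' e' \<phi>' where e': "dual_basis smult W n' e' \<phi>'"
    and tr: "\<And>T. mtrace smult W T = (\<Sum>i<n'. \<phi>' i (T (e' i)))"
    using mtrace_dual_basisE[OF assms(1)] by blast
  show ?thesis
    using e' assms(2) unfolding tr dual_basis_def by (intro sum.cong) auto
qed

context module
begin

lemma linear_on_zero:
  assumes "subspace W" and "linear_on scale W \<phi>"
  shows "\<phi> 0 = 0"
proof -
  have "\<phi> (1 *s 0 + 0) = 1 * \<phi> 0 + \<phi> 0"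
    using assms subspace_0 unfolding linear_on_def by blast
  then show ?thesis by simp
qed

lemma linear_on_sum:
  assumes W: "subspace W" and \<phi>: "linear_on scale W \<phi>" and x: "\<forall>i<(k::nat). x i \<in> W"
  shows "\<phi> (\<Sum>i<k. c i *s x i) = (\<Sum>i<k. c i * \<phi> (x i))"
  using x
proof (induction k)
  case 0
  show ?case using linear_on_zero[OF W \<phi>] by simp
next
  case (Suc k)
  have "(\<Sum>i<k. c i *s x i) \<in> W"
    using Suc.prems by (intro subspace_sum[OF W] subspace_scale[OF W]) auto
  then have "\<phi> (c k *s x k + (\<Sum>i<k. c i *s x i)) = c k * \<phi> (x k) + \<phi> (\<Sum>i<k. c i *s x i)"
    using \<phi> Suc.prems unfolding linear_on_def by simp
  with Suc.IH Suc.prems show ?case by (simp add: add.commute)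
qed

lemma linear_on_compose:
  assumes "linear_on scale W \<psi>" and "module_hom scale scale T" and "T ` W \<subseteq> W"
  shows "linear_on scale W (\<lambda>x. \<psi> (T x))"
  using assms unfolding linear_on_def module_hom_iff by (auto simp: image_subset_iff)

text \<open>Both sums equal the double sum over i, j of psi_j (T e_i) * phi_i f_j.\<close>
lemma dual_basis_trace_eq:
  assumes W: "subspace W"
    and e: "dual_basis scale W n e \<phi>" and f: "dual_basis scale W m f \<psi>"
    and T: "module_hom scale scale T" "T ` W \<subseteq> W"
  shows "(\<Sum>i<n. \<phi> i (T (e i))) = (\<Sum>j<m. \<psi> j (T (f j)))"
proof -
  have e_in: "\<forall>i<n. e i \<in> W" and \<phi>: "\<And>i. i < n \<Longrightarrow> linear_on scale W (\<phi> i)"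
    and e_span: "\<And>x. x \<in> W \<Longrightarrow> x = (\<Sum>i<n. \<phi> i x *s e i)"
    using e unfolding dual_basis_def by auto
  have f_in: "\<forall>j<m. f j \<in> W" and \<psi>: "\<And>j. j < m \<Longrightarrow> linear_on scale W (\<psi> j)"
    and f_span: "\<And>x. x \<in> W \<Longrightarrow> x = (\<Sum>j<m. \<psi> j x *s f j)"
    using f unfolding dual_basis_def by auto
  have "\<phi> i (T (e i)) = (\<Sum>j<m. \<psi> j (T (e i)) * \<phi> i (f j))" if "i < n" for i
  proof -
    have "T (e i) \<in> W" using that e_in T(2) by auto
    then have "\<phi> i (T (e i)) = \<phi> i (\<Sum>j<m. \<psi> j (T (e i)) *s f j)"
      by (subst f_span) auto
    also have "\<dots> = (\<Sum>j<m. \<psi> j (T (e i)) * \<phi> i (f j))"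
      by (rule linear_on_sum[OF W \<phi>[OF that] f_in])
    finally show ?thesis .
  qed
  then have "(\<Sum>i<n. \<phi> i (T (e i))) = (\<Sum>j<m. \<Sum>i<n. \<phi> i (f j) * \<psi> j (T (e i)))"
    by (simp add: sum.swap[of _ "{..<m}"] mult.commute)
  also have "\<dots> = (\<Sum>j<m. \<psi> j (T (f j)))"
  proof (rule sum.cong)
    fix j assume "j \<in> {..<m}"
    then have "\<psi> j (T (f j)) = \<psi> j (T (\<Sum>i<n. \<phi> i (f j) *s e i))"
      using f_in e_span by auto
    also have "\<dots> = (\<Sum>i<n. \<phi> i (f j) * \<psi> j (T (e i)))"
      using \<open>j \<in> {..<m}\<close> by (intro linear_on_sum[OF W _ e_in] linear_on_compose[OF \<psi> T]) auto
    finally show "(\<Sum>i<n. \<phi> i (f j) * \<psi> j (T (e i))) = \<psi> j (T (f j))" ..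
  qed simp
  finally show ?thesis .
qed

lemma mtrace_eq_dual_basis:
  assumes "subspace W" and e: "dual_basis scale W n e \<phi>"
    and "module_hom scale scale T" and "T ` W \<subseteq> W"
  shows "mtrace scale W T = (\<Sum>i<n. \<phi> i (T (e i)))"
proof -
  obtain n' e' \<phi>' where e': "dual_basis scale W n' e' \<phi>'"
    and tr: "\<And>T. mtrace scale W T = (\<Sum>i<n'. \<phi>' i (T (e' i)))"
    using mtrace_dual_basisE[OF e] by blast
  show ?thesis
    unfolding tr by (rule dual_basis_trace_eq[OF assms(1) e' e assms(3,4)])
qed

lemma dual_basis_range_projection:
  assumes e: "dual_basis scale UNIV n e \<phi>"
    and P: "module_hom scale scale P" and idem: "\<And>x. P (P x) = P x"
  shows "dual_basis scale (range P) n (\<lambda>i. P (e i)) \<phi>"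
  unfolding dual_basis_def
proof (intro conjI allI impI ballI)
  show "P (e i) \<in> range P" for i by simp
  show "linear_on scale (range P) (\<phi> i)" if "i < n" for i
    using e that unfolding dual_basis_def linear_on_def by blast
  fix x assume "x \<in> range P"
  then have "x = P x" using idem by auto
  also have "\<dots> = P (\<Sum>i<n. \<phi> i x *s e i)"
    using e unfolding dual_basis_def by auto
  also have "\<dots> = (\<Sum>i<n. \<phi> i x *s P (e i))"
    using P by (simp add: module_hom.sum module_hom.scale)
  finally show "x = (\<Sum>i<n. \<phi> i x *s P (e i))" .
qed

lemma dual_basis_complementary_projections:
  assumes e: "dual_basis scale UNIV n e \<phi>"
    and P: "module_hom scale scale P" "\<And>x. P (P x) = P x"
    and Q: "module_hom scale scale Q" "\<And>x. Q (Q x) = Q x"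
    and PQ: "\<And>x. P x + Q x = x"
  shows "dual_basis scale UNIV (n + n)
           (\<lambda>i. if i < n then P (e i) else Q (e (i - n)))
           (\<lambda>i x. if i < n then \<phi> i (P x) else \<phi> (i - n) (Q x))"
  unfolding dual_basis_def
proof (intro conjI allI impI ballI)
  have \<phi>: "linear_on scale UNIV (\<phi> i)" if "i < n" for i
    using e that unfolding dual_basis_def by blast
  show "linear_on scale UNIV (\<lambda>x. if i < n then \<phi> i (P x) else \<phi> (i - n) (Q x))"
    if "i < n + n" for i
    using that \<phi>[of i] \<phi>[of "i - n"] P(1) Q(1)
    by (auto simp: linear_on_def module_hom_iff)
  fix x :: 'b
  have "(\<Sum>i<n. \<phi> i (P x) *s P (e i)) = P x" "(\<Sum>i<n. \<phi> i (Q x) *s Q (e i)) = Q x"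
    using dual_basis_range_projection[OF e P] dual_basis_range_projection[OF e Q]
    unfolding dual_basis_def by auto
  then show "x = (\<Sum>i<n + n. (if i < n then \<phi> i (P x) else \<phi> (i - n) (Q x)) *s
                     (if i < n then P (e i) else Q (e (i - n))))"
    by (simp add: sum_lessThan_add PQ)
qed simp

lemma mtrace_complementary_projections:
  assumes e: "dual_basis scale UNIV n e \<phi>" and T: "module_hom scale scale T"
    and P: "module_hom scale scale P" "\<And>x. P (P x) = P x"
    and Q: "module_hom scale scale Q" "\<And>x. Q (Q x) = Q x"
    and PQ: "\<And>x. P x + Q x = x"
  shows "mtrace scale UNIV T
           = mtrace scale (range P) (\<lambda>x. P (T x)) + mtrace scale (range Q) (\<lambda>x. Q (T x))"
proof -
  have hom: "module_hom scale scale (\<lambda>x. R (T x))" if "module_hom scale scale R" for R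
    using module_hom_compose[OF T that] by (simp add: comp_def)
  have trace_range: "mtrace scale (range R) (\<lambda>x. R (T x)) = (\<Sum>i<n. \<phi> i (R (T (R (e i)))))"
    if R: "module_hom scale scale R" "\<And>x. R (R x) = R x" for R
    using module_hom.subspace_image[OF R(1) subspace_UNIV]
    by (intro mtrace_eq_dual_basis dual_basis_range_projection[OF e R] hom[OF R(1)]) auto
  have "mtrace scale UNIV T = (\<Sum>i<n + n. (if i < n then \<phi> i (P (T (P (e i))))
                                             else \<phi> (i - n) (Q (T (Q (e (i - n)))))))"
    using mtrace_eq_dual_basis[OF subspace_UNIV dual_basis_complementary_projections[OF e P Q PQ] T]
    by (simp add: if_distrib cong: if_cong)
  also have "\<dots> = (\<Sum>i<n. \<phi> i (P (T (P (e i))))) + (\<Sum>i<n. \<phi> i (Q (T (Q (e i)))))"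
    by (simp add: sum_lessThan_add)
  finally show ?thesis
    by (simp add: trace_range P Q)
qed

end

section \<open>Courant algebroids\<close>

locale courant =
  fixes smult :: "'r::{comm_ring_1,real_algebra_1} \<Rightarrow> 'e::ab_group_add \<Rightarrow> 'e"
    and anchor :: "'e \<Rightarrow> 'r \<Rightarrow> 'r"
    and pair :: "'e \<Rightarrow> 'e \<Rightarrow> 'r"
    and br :: "'e \<Rightarrow> 'e \<Rightarrow> 'e"
  assumes courant_algebroid: "courant_algebroid smult anchor pair br"
begin

lemma
  shows module_ax: "module_ax smult"
    and dual_basis_exists: "\<exists>n e \<phi>. dual_basis smult UNIV n e \<phi>"
    and anchor_linear: "anchor (smult r a + b) f = r * anchor a f + anchor b f"
    and anchor_add: "anchor a (f + g) = anchor a f + anchor a g"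
    and anchor_mult: "anchor a (f * g) = f * anchor a g + g * anchor a f"
    and pair_commute: "pair a b = pair b a"
    and pair_linear: "pair (smult r a + b) c = r * pair a c + pair b c"
    and pair_nondegenerate: "\<forall>b. pair a b = 0 \<Longrightarrow> a = 0"
    and pair_represents: "linear_on smult UNIV \<phi> \<Longrightarrow> \<exists>a. \<forall>b. pair a b = \<phi> b"
    and br_add_right: "br a (b + c) = br a b + br a c"
    and br_add_left: "br (a + b) c = br a c + br b c"
    and anchor_pair: "anchor a (pair b c) = pair (br a b) c + pair b (br a c)"
    and br_self: "br a a + br a a = rho_star_d anchor pair (pair a a)"
  using courant_algebroid unfolding courant_algebroid_def by meson+

sublocale module smult
  by (rule module_ax_imp_module[OF module_ax])

lemma double_cancel: "x + x = y + y \<Longrightarrow> x = (y::'e)"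
  by (metis module_smult_half_double[OF module_axioms, of x]
      module_smult_half_double[OF module_axioms, of y])

lemma pair_add_left: "pair (a + b) c = pair a c + pair b c"
  using pair_linear[of 1 a b c] by simp

lemma pair_zero_left: "pair 0 c = 0"
  using pair_add_left[of 0 0 c] by simp

lemma pair_smult_left: "pair (smult r a) c = r * pair a c"
  using pair_linear[of r a 0 c] by (simp add: pair_zero_left)

lemma pair_diff_left: "pair (a - b) c = pair a c - pair b c"
  using pair_linear[of "-1" b a c] by (simp add: algebra_simps)

lemma pair_minus_right: "pair c (- a) = - pair c a"
  using pair_smult_left[of "-1" a c] by (simp add: pair_commute[of c])

lemma pair_eqI: "(\<And>c. pair a c = pair b c) \<Longrightarrow> a = b"
  using pair_nondegenerate[of "a - b"] by (simp add: pair_diff_left)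

lemma pair_rho_star_d: "pair (rho_star_d anchor pair f) a = anchor a f"
proof -
  have "linear_on smult UNIV (\<lambda>a. anchor a f)"
    unfolding linear_on_def by (simp add: anchor_linear)
  then obtain x where x: "\<forall>a. pair x a = anchor a f"
    using pair_represents by blast
  then have "(THE x. \<forall>a. pair x a = anchor a f) = x"
    by (rule the_equality) (simp add: pair_eqI x)
  with x show ?thesis
    unfolding rho_star_d_def by simp
qed

lemma rho_star_d_add:
  "rho_star_d anchor pair (f + g) = rho_star_d anchor pair f + rho_star_d anchor pair g"
  by (rule pair_eqI) (simp add: pair_rho_star_d pair_add_left anchor_add)

lemma rho_star_d_zero: "rho_star_d anchor pair 0 = 0"
  using rho_star_d_add[of 0 0] by simp

lemma br_smult_right: "br a (smult r c) = smult r (br a c) + smult (anchor a r) c"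
proof (rule pair_eqI)
  fix b
  have "pair (br a (smult r c)) b = anchor a (pair (smult r c) b) - pair (smult r c) (br a b)"
    by (simp add: anchor_pair)
  also have "\<dots> = r * (anchor a (pair c b) - pair c (br a b)) + anchor a r * pair c b"
    by (simp add: pair_smult_left anchor_mult algebra_simps)
  also have "\<dots> = pair (smult r (br a c) + smult (anchor a r) c) b"
    by (simp add: anchor_pair pair_add_left pair_smult_left)
  finally show "pair (br a (smult r c)) b = pair (smult r (br a c) + smult (anchor a r) c) b" .
qed

text \<open>Polarization of the axiom 2[a,a] = rho^* d<a,a>.\<close>
lemma br_add_br_swap: "br a b + br b a = rho_star_d anchor pair (pair a b)"
proof (rule double_cancel)
  have "pair (a + b) (a + b) = pair a a + pair b b + (pair a b + pair a b)"
    using pair_add_left[of a b "a + b"] pair_add_left[of a b a] pair_add_left[of a b b]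
    by (simp add: pair_commute[of a "a + b"] pair_commute[of b "a + b"] pair_commute[of b a])
  then have "br (a + b) (a + b) + br (a + b) (a + b)
      = (br a a + br a a) + (br b b + br b b)
        + (rho_star_d anchor pair (pair a b) + rho_star_d anchor pair (pair a b))"
    by (simp only: br_self rho_star_d_add)
  then show "br a b + br b a + (br a b + br b a)
      = rho_star_d anchor pair (pair a b) + rho_star_d anchor pair (pair a b)"
    by (simp add: br_add_left br_add_right algebra_simps)
qed

text \<open>Without the orthogonality hypothesis there is an extra term <c,a> rho^* d r.\<close>
lemma br_smult_left:
  assumes "pair c a = 0"
  shows "br (smult r c) a = smult r (br c a) - smult (anchor a r) c"
proof -
  have swap: "br x y = - br y x" if "pair x y = 0" for x y
    using br_add_br_swap[of x y] that by (simp add: rho_star_d_zero eq_neg_iff_add_eq_0)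
  show ?thesis
    using assms by (simp add: swap pair_smult_left br_smult_right)
qed

end

section \<open>Generalized connections and the naive curvature\<close>

locale courant_connection = courant +
  fixes D
  assumes generalized_connection: "generalized_connection smult anchor pair D"
begin

lemma
  shows D_linear_left: "D (smult r b + b') a = smult r (D b a) + D b' a"
    and D_add_right: "D b (a + a') = D b a + D b a'"
    and D_smult_right_rho_star_d:
      "D b (smult f a) = smult f (D b a) + smult (pair (rho_star_d anchor pair f) b) a"
  using generalized_connection unfolding generalized_connection_def by meson+

lemma module_hom_D_left: "module_hom smult smult (\<lambda>b. D b a)"
proof -
  have add: "D (b + b') a = D b a + D b' a" for b b'
    using D_linear_left[of 1] by simp
  then have "D 0 a = 0"
    using add[of 0 0] by simp
  then show ?thesis
    using D_linear_left[of _ _ 0] by (simp add: module_hom_iff module_axioms add)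
qed

lemma D_leibniz: "D b (smult f a) = smult f (D b a) + smult (anchor b f) a"
  by (simp add: D_smult_right_rho_star_d pair_rho_star_d)

text \<open>The anchor terms produced by the Leibniz rule and by the bracket cancel.\<close>
lemma naive_curv_linear_left:
  assumes "pair c a = 0"
  shows "naive_curv br D (smult r c + x) a b
           = smult r (naive_curv br D c a b) + naive_curv br D x a b"
proof -
  interpret Dl: module_hom smult smult "\<lambda>c. D c b" by (rule module_hom_D_left)
  have "br (smult r c + x) a = smult r (br c a) - smult (anchor a r) c + br x a"
    using assms by (simp add: br_add_left br_smult_left)
  then have bracket_term: "D (br (smult r c + x) a) b
      = smult r (D (br c a) b) - smult (anchor a r) (D c b) + D (br x a) b"
    by (simp add: Dl.add Dl.diff Dl.scale)
  have leibniz_term: "D a (D (smult r c + x) b)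
      = smult r (D a (D c b)) + smult (anchor a r) (D c b) + D a (D x b)"
    by (simp add: D_linear_left D_add_right D_leibniz)
  show ?thesis
    unfolding naive_curv_def leibniz_term bracket_term D_linear_left[of r c x "D a b"]
    by (simp add: algebra_simps)
qed

lemma naive_curv_add_left:
  "pair x a = 0 \<Longrightarrow> naive_curv br D (x + y) a b = naive_curv br D x a b + naive_curv br D y a b"
  using naive_curv_linear_left[of x a 1 y b] by simp

lemma naive_curv_zero_left: "naive_curv br D 0 a b = 0"
  using naive_curv_linear_left[of 0 a 1 0 b] by (simp add: pair_zero_left)

lemma naive_curv_smult_left:
  "pair x a = 0 \<Longrightarrow> naive_curv br D (smult r x) a b = smult r (naive_curv br D x a b)"
  using naive_curv_linear_left[of x a r 0 b] by (simp add: naive_curv_zero_left)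

lemma naive_curv_add_right:
  "naive_curv br D x a (b + b') = naive_curv br D x a b + naive_curv br D x a b'"
  unfolding naive_curv_def by (simp add: D_add_right algebra_simps)

end

section \<open>Generalized metrics and compatible connections\<close>

locale module_involution = module smult
  for smult :: "'r::{comm_ring_1,real_algebra_1} \<Rightarrow> 'e::ab_group_add \<Rightarrow> 'e" +
  fixes G :: "'e \<Rightarrow> 'e"
  assumes G_linear: "G (smult r a + b) = smult r (G a) + G b"
    and G_involutive: "G (G a) = a"
begin

sublocale G: module_hom smult smult G
proof unfold_locales
  show add: "G (a + b) = G a + G b" for a b
    using G_linear[of 1] by simp
  show "G (smult r a) = smult r (G a)" for r a
    using G_linear[of r a 0] add[of 0 0] by simp
qed

lemma smult_half_double: "smult (of_real (1/2)) (x + x) = x"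
  by (rule module_smult_half_double[OF module_axioms])

lemma module_hom_ppart: "module_hom smult smult (ppart smult G)"
  unfolding ppart_def module_hom_iff
  by (simp add: module_axioms G.add G.scale scale_right_distrib mult.commute)

lemma module_hom_mpart: "module_hom smult smult (mpart smult G)"
  unfolding mpart_def module_hom_iff
  by (simp add: module_axioms G.add G.scale scale_right_distrib scale_right_diff_distrib
      mult.commute)

sublocale ppart: module_hom smult smult "ppart smult G"
  by (rule module_hom_ppart)

sublocale mpart: module_hom smult smult "mpart smult G"
  by (rule module_hom_mpart)

lemma ppart_add_mpart: "ppart smult G x + mpart smult G x = x"
  unfolding ppart_def mpart_def scale_right_distrib[symmetric] by (simp add: smult_half_double)

lemma ppart_in_Vplus: "ppart smult G x \<in> Vplus G"
  by (simp add: Vplus_def ppart_def G.scale G.add G_involutive add.commute)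

lemma mpart_in_Vminus: "mpart smult G x \<in> Vminus G"
  by (simp add: Vminus_def mpart_def G.scale G.diff G_involutive flip: scale_minus_right)

lemma ppart_Vplus: "x \<in> Vplus G \<Longrightarrow> ppart smult G x = x"
  and mpart_Vplus: "x \<in> Vplus G \<Longrightarrow> mpart smult G x = 0"
  and ppart_Vminus: "x \<in> Vminus G \<Longrightarrow> ppart smult G x = 0"
  and mpart_Vminus: "x \<in> Vminus G \<Longrightarrow> mpart smult G x = x"
  by (simp_all add: Vplus_def Vminus_def ppart_def mpart_def smult_half_double)

lemma ppart_idem: "ppart smult G (ppart smult G x) = ppart smult G x"
  by (rule ppart_Vplus[OF ppart_in_Vplus])

lemma mpart_idem: "mpart smult G (mpart smult G x) = mpart smult G x"
  by (rule mpart_Vminus[OF mpart_in_Vminus])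

lemma range_ppart: "range (ppart smult G) = Vplus G"
  using ppart_in_Vplus ppart_Vplus by (metis image_subsetI rangeI subsetI subset_antisym)

lemma range_mpart: "range (mpart smult G) = Vminus G"
  using mpart_in_Vminus mpart_Vminus by (metis image_subsetI rangeI subsetI subset_antisym)

end

locale compatible_metric_connection = courant_connection +
  fixes G
  assumes generalized_metric: "generalized_metric smult pair G"
    and compatible: "compatible G D"
begin

sublocale module_involution smult G
  using generalized_metric by unfold_locales (simp_all add: generalized_metric_def)

lemma G_self_adjoint: "pair (G a) b = pair a (G b)"
  using generalized_metric unfolding generalized_metric_def by blast

lemma pair_Vplus_Vminus:
  assumes "x \<in> Vplus G" and "y \<in> Vminus G"
  shows "pair x y = 0"
proof -
  have "pair x y = pair (G x) y"
    using assms(1) by (simp add: Vplus_def)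
  also have "\<dots> = pair x (G y)"
    by (rule G_self_adjoint)
  also have "\<dots> = - pair x y"
    using assms(2) by (simp add: Vminus_def pair_minus_right)
  finally have "pair x y + pair x y = 0"
    by (simp only: eq_neg_iff_add_eq_0)
  then show ?thesis
    by (rule real_algebra_double_eq_0)
qed

lemma naive_curv_Vplus: "b \<in> Vplus G \<Longrightarrow> naive_curv br D u v b \<in> Vplus G"
  using compatible unfolding compatible_def naive_curv_def Vplus_def by (simp add: G.diff)

lemma naive_curv_Vminus: "b \<in> Vminus G \<Longrightarrow> naive_curv br D u v b \<in> Vminus G"
  using compatible unfolding compatible_def naive_curv_def Vminus_def by (simp add: G.diff)

lemma naive_curv_decompose:
  "naive_curv br D u v b = naive_curv br D u v (ppart smult G b) + naive_curv br D u v (mpart smult G b)"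
  by (simp add: naive_curv_add_right[symmetric] ppart_add_mpart)

lemma ppart_naive_curv: "ppart smult G (naive_curv br D u v b) = naive_curv br D u v (ppart smult G b)"
  by (subst naive_curv_decompose)
    (simp add: ppart.add ppart_Vplus ppart_Vminus naive_curv_Vplus naive_curv_Vminus
      ppart_in_Vplus mpart_in_Vminus)

lemma mpart_naive_curv: "mpart smult G (naive_curv br D u v b) = naive_curv br D u v (mpart smult G b)"
  by (subst naive_curv_decompose)
    (simp add: mpart.add mpart_Vplus mpart_Vminus naive_curv_Vplus naive_curv_Vminus
      ppart_in_Vplus mpart_in_Vminus)

lemma module_hom_total_curv: "module_hom smult smult (\<lambda>c. total_curv smult br G D c a b)"
proof -
  have orth: "pair (ppart smult G c) (mpart smult G a) = 0"
    "pair (mpart smult G c) (ppart smult G a) = 0" for c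
    using pair_Vplus_Vminus[OF ppart_in_Vplus mpart_in_Vminus]
    by (simp_all add: pair_commute[of "mpart smult G c"])
  have "total_curv smult br G D (c + c') a b
      = total_curv smult br G D c a b + total_curv smult br G D c' a b" for c c'
    unfolding total_curv_def ppart.add mpart.add
      naive_curv_add_left[OF orth(1)] naive_curv_add_left[OF orth(2)]
    by (simp only: add_ac)
  moreover have "total_curv smult br G D (smult r c) a b = smult r (total_curv smult br G D c a b)" for r c
    unfolding total_curv_def ppart.scale mpart.scale naive_curv_smult_left[OF orth(1)]
      naive_curv_smult_left[OF orth(2)] scale_right_distrib ..
  ultimately show ?thesis
    by (simp add: module_hom_iff module_axioms)
qed

lemma total_curv_Vplus:
  "c \<in> Vplus G \<Longrightarrow> total_curv smult br G D c a b = naive_curv br D c (mpart smult G a) b"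
  by (simp add: total_curv_def ppart_Vplus mpart_Vplus naive_curv_zero_left)

lemma total_curv_Vminus:
  "c \<in> Vminus G \<Longrightarrow> total_curv smult br G D c a b = naive_curv br D c (ppart smult G a) b"
  by (simp add: total_curv_def ppart_Vminus mpart_Vminus naive_curv_zero_left)

theorem total_ric_eq_ric_GF:
  "total_ric smult br G D a b =
     ric_GF_plus smult br G D (mpart smult G a) (ppart smult G b) +
     ric_GF_minus smult br G D (ppart smult G a) (mpart smult G b)"
proof -
  obtain n e \<phi> where e: "dual_basis smult UNIV n e \<phi>"
    using dual_basis_exists by blast
  let ?T = "\<lambda>c. total_curv smult br G D c a b"
  have "total_ric smult br G D a b
      = mtrace smult (Vplus G) (\<lambda>c. ppart smult G (?T c))
        + mtrace smult (Vminus G) (\<lambda>c. mpart smult G (?T c))"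
    unfolding total_ric_def range_ppart[symmetric] range_mpart[symmetric]
    by (rule mtrace_complementary_projections[OF e module_hom_total_curv
          module_hom_ppart ppart_idem module_hom_mpart mpart_idem ppart_add_mpart])
  also have "mtrace smult (Vplus G) (\<lambda>c. ppart smult G (?T c))
      = ric_GF_plus smult br G D (mpart smult G a) (ppart smult G b)"
    unfolding ric_GF_plus_def
    using dual_basis_range_projection[OF e module_hom_ppart ppart_idem, unfolded range_ppart]
    by (rule mtrace_cong) (simp add: total_curv_Vplus ppart_naive_curv)
  also have "mtrace smult (Vminus G) (\<lambda>c. mpart smult G (?T c))
      = ric_GF_minus smult br G D (ppart smult G a) (mpart smult G b)"
    unfolding ric_GF_minus_def
    using dual_basis_range_projection[OF e module_hom_mpart mpart_idem, unfolded range_mpart]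
    by (rule mtrace_cong) (simp add: total_curv_Vminus mpart_naive_curv)
  finally show ?thesis .
qed

end

theorem lemma4p3:
  fixes smult :: "'r::{comm_ring_1,real_algebra_1} \<Rightarrow> 'e::ab_group_add \<Rightarrow> 'e"
    and anchor :: "'e \<Rightarrow> 'r \<Rightarrow> 'r"
    and pair :: "'e \<Rightarrow> 'e \<Rightarrow> 'r"
    and br :: "'e \<Rightarrow> 'e \<Rightarrow> 'e"
    and G :: "'e \<Rightarrow> 'e"
    and D :: "'e \<Rightarrow> 'e \<Rightarrow> 'e"
  assumes "courant_algebroid smult anchor pair br"
    and "generalized_metric smult pair G"
    and "generalized_connection smult anchor pair D"
    and "compatible G D"
  shows "total_ric smult br G D a b =
           ric_GF_plus smult br G D (mpart smult G a) (ppart smult G b) +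
           ric_GF_minus smult br G D (ppart smult G a) (mpart smult G b)"
proof -
  interpret compatible_metric_connection smult anchor pair br D G
    by unfold_locales (fact assms)+
  show ?thesis
    by (rule total_ric_eq_ric_GF)
qed

end
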